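(* Let $B$ be a ring, $X$ an $m\times n$ matrix of indeterminates, and $\delta=[c_1,\ldots,c_r|d_1,\ldots,d_r]\in\Delta(X)$, with associated $t$ and $\tau_i$ ($1\le i\le t$) as in the context. For every $1\le i\le t$ there exists an integer $1\le N_i\le r$ such that: (1) if $[e_1,\ldots,e_s|f_1,\ldots,f_s]\in\Delta(X;\delta)\setminus\Delta(X;\tau_i)$, then $s\ge N_i$; (2) for every $N_i\le s\le r$, $[c_1,\ldots,c_s|d_1,\ldots,d_s]\in\Delta(X;\delta)\setminus\Delta(X;\tau_i)$.
   Context: Let $B$ be a ring and $X$ an $m\times n$ matrix of indeterminates over $B$. For $1\le r\le\min\{m,n\}$, $1\le a_1<\cdots<a_r\le m$, $1\le b_1<\cdots<b_r\le n$, $[a_1,\ldots,a_r|b_1,\ldots,b_r]$ is the $r$-minor of $X$ with those rows and columns; $\Delta(X)$ is the set of all such minors, ordered by $[a_1,\ldots,a_r|b_1,\ldots,b_r]\le[c_1,\ldots,c_s|d_1,\ldots,d_s]$ iff $r\ge s$ and $a_i\le c_i$, $b_i\le d_i$ for $1\le i\le s$. For $\gamma\in\Delta(X)$, $\Delta(X;\gamma)=\{\xi\in\Delta(X)\mid\xi\ge\gamma\}$. Associated data: Let $N=n+m$. For $\delta=[c_1,\ldots,c_r|d_1,\ldots,d_r]$, let $\tilde\delta=[a_1,\ldots,a_m]$ be the increasing listing of $\{d_1,\ldots,d_r\}\cup\{m+n+1-e\mid e\in\{1,\ldots,m\}\setminus\{c_1,\ldots,c_r\}\}$. To a sequence $1\le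 b_1<\cdots<b_m\le N$ with $[b_1,\ldots,b_m]\ne[n+1,\ldots,n+m]$ associate the minor $[e_1,\ldots,e_s|b_1,\ldots,b_s]\in\Delta(X)$, where $s=\max\{j\mid b_j\le n\}$ and $\{e_1<\cdots<e_s\}=\{1,\ldots,m\}\setminus\{m+n+1-b_j\mid s<j\le m\}$. Blocks of $\tilde\delta$: set $a_{m+1}=N+1$; decompose $\{a_1,\ldots,a_m\}$ into maximal runs of consecutive integers; if $a_m=N$ the run containing $N$ is $\beta_{t+1}$, else $\beta_{t+1}=\emptyset$; the other runs in increasing order are $\beta_0,\ldots,\beta_t$, $\beta_i=\{a_{k(i)+1},\ldots,a_{k(i+1)}\}$, $0=k(0)<\cdots<k(t+1)$. For $1\le i\le t$, $\tilde\tau_i$ is the increasing listing of $(\{a_1,\ldots,a_m\}\setminus\{a_{k(i)}\})\cup\{a_{k(i+1)}+1\}$. If $\tilde\tau_i\ne[n+1,\ldots,n+m]$, $\tau_i\in\Delta(X;\delta)$ is the minor associated to $\tilde\tau_i$; if $\tilde\tau_i=[n+1,\ldots,n+m]$, one sets $\Delta(X;\tau_i)=\emptyset$. *)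

theory Defs
  imports Main
begin

text \<open>A minor [a_1..a_r | b_1..b_r] of an m x n matrix is represented by the pair of
  lists (rows, columns); list positions are 0-based, entries are 1-based indices.\<close>

definition is_minor :: "nat \<Rightarrow> nat \<Rightarrow> nat list \<times> nat list \<Rightarrow> bool" where
  "is_minor m n x \<longleftrightarrow> (case x of (a, b) \<Rightarrow>
      length a = length b \<and> 1 \<le> length a \<and> length a \<le> min m n \<and>
      sorted_wrt (<) a \<and> sorted_wrt (<) b \<and>
      set a \<subseteq> {1..m} \<and> set b \<subseteq> {1..n})"

definition minors :: "nat \<Rightarrow> nat \<Rightarrow> (nat list \<times> nat list) set" where
  "minors m n = {x. is_minor m n x}"

definition minor_le :: "nat list \<times> nat list \<Rightarrow> nat list \<times> nat list \<Rightarrow> bool" where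
  "minor_le x y \<longleftrightarrow> (case x of (a, b) \<Rightarrow> case y of (c, d) \<Rightarrow>
      length c \<le> length a \<and> (\<forall>i < length c. a ! i \<le> c ! i \<and> b ! i \<le> d ! i))"

definition upset :: "nat \<Rightarrow> nat \<Rightarrow> nat list \<times> nat list \<Rightarrow> (nat list \<times> nat list) set" where
  "upset m n \<gamma> = {\<xi> \<in> minors m n. minor_le \<gamma> \<xi>}"

definition assoc_seq :: "nat \<Rightarrow> nat \<Rightarrow> nat list \<times> nat list \<Rightarrow> nat list" where
  "assoc_seq m n x = (case x of (c, d) \<Rightarrow>
      sorted_list_of_set (set d \<union> {m + n + 1 - e | e. e \<in> {1..m} - set c}))"

text \<open>The minor associated to a sequence b_1 < ... < b_m (different from [n+1..n+m]).\<close>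
definition assoc_minor :: "nat \<Rightarrow> nat \<Rightarrow> nat list \<Rightarrow> nat list \<times> nat list" where
  "assoc_minor m n b = (let s = Max {j. 1 \<le> j \<and> j \<le> m \<and> b ! (j - 1) \<le> n} in
      (sorted_list_of_set ({1..m} - {m + n + 1 - b ! (j - 1) | j. s < j \<and> j \<le> m}),
       take s b))"

text \<open>Blocks of tilde-delta = [a_1..a_m]: the maximal runs of consecutive integers.
  The run containing N = n+m (if any) is beta_(t+1); the remaining runs, in increasing
  order, are beta_0, ..., beta_t. A run is determined by its last element x (x \<in> A,
  x+1 \<notin> A), so the list of last elements a_(k(1)), ..., a_(k(t+1)) of
  beta_0, ..., beta_t is the increasing listing of the x \<in> A with x+1 \<notin> A, x \<noteq> N.\<close>
definition block_ends :: "nat \<Rightarrow> nat \<Rightarrow> nat list \<times> nat list \<Rightarrow> nat list" where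
  "block_ends m n x = (let A = set (assoc_seq m n x) in
      sorted_list_of_set {y \<in> A. Suc y \<notin> A \<and> y \<noteq> n + m})"

text \<open>t (so that the blocks other than beta_(t+1) are beta_0..beta_t)\<close>
definition num_t :: "nat \<Rightarrow> nat \<Rightarrow> nat list \<times> nat list \<Rightarrow> nat" where
  "num_t m n x = length (block_ends m n x) - 1"

text \<open>tilde-tau_i = increasing listing of (A - {a_(k(i))}) \<union> {a_(k(i+1)) + 1}, 1 \<le> i \<le> t;
  a_(k(i)) is the last element of beta_(i-1), a_(k(i+1)) the last element of beta_i.\<close>
definition tau_seq :: "nat \<Rightarrow> nat \<Rightarrow> nat list \<times> nat list \<Rightarrow> nat \<Rightarrow> nat list" where
  "tau_seq m n x i = (let A = set (assoc_seq m n x); E = block_ends m n x in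
      sorted_list_of_set ((A - {E ! (i - 1)}) \<union> {E ! i + 1}))"

definition tau_upset :: "nat \<Rightarrow> nat \<Rightarrow> nat list \<times> nat list \<Rightarrow> nat \<Rightarrow> (nat list \<times> nat list) set" where
  "tau_upset m n x i = (if tau_seq m n x i = [n + 1 ..< n + m + 1] then {}
      else upset m n (assoc_minor m n (tau_seq m n x i)))"

end

theory Submission
  imports Defs
begin

(*
  For a minor \<gamma> with \<gamma> \<not>\<le> \<delta>, the truncations [c_1..c_s|d_1..d_s] of \<delta> lying
  above \<gamma> form an initial segment of s, and N is the first s outside it; any
  \<xi> \<ge> \<delta> with fewer than N rows lies above the truncation of \<delta> of its own size,
  hence above \<gamma>.  So the point is that \<delta> \<not>\<ge> \<tau>_i.  Pad a minor of size k to m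
  positions by giving positions k+1..m the value m+n+1 and take the sum of
  row index plus column index over all positions: this weight is monotone for
  \<le> and exceeds the sum of the associated sequence by 1+...+m.  Passing from
  \<delta>~ to \<tau>_i~ replaces a_(k(i)) by the larger a_(k(i+1))+1, so \<tau>_i is heavier
  than \<delta> and cannot lie below it.
*)

lemma minor_le_trans: "minor_le x y \<Longrightarrow> minor_le y z \<Longrightarrow> minor_le x z"
  unfolding minor_le_def by (auto split: prod.splits) (meson dual_order.trans less_le_trans)+

lemma minor_le_take:
  "length c = length d \<Longrightarrow> s \<le> length c \<Longrightarrow> minor_le (c, d) (take s c, take s d)"
  unfolding minor_le_def by simp

lemma minor_le_take_length:
  "length c = length d \<Longrightarrow> minor_le (c, d) (e, f) \<Longrightarrow>
    minor_le (take (length e) c, take (length e) d) (e, f)"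
  unfolding minor_le_def by simp

lemma take_in_upset:
  assumes "(c, d) \<in> minors m n" "1 \<le> s" "s \<le> length c"
  shows "(take s c, take s d) \<in> upset m n (c, d)"
  using assms set_take_subset[of s c] set_take_subset[of s d]
  by (auto simp: upset_def minors_def is_minor_def minor_le_def sorted_wrt_take)

lemma upset_diff_length_threshold:
  assumes \<delta>: "(c, d) \<in> minors m n" and not_le: "\<not> minor_le \<gamma> (c, d)"
  shows "\<exists>N. 1 \<le> N \<and> N \<le> length c \<and>
    (\<forall>e f. (e, f) \<in> upset m n (c, d) - upset m n \<gamma> \<longrightarrow> N \<le> length e) \<and>
    (\<forall>s. N \<le> s \<and> s \<le> length c \<longrightarrow>
       (take s c, take s d) \<in> upset m n (c, d) - upset m n \<gamma>)"
proof -
  define P where "P s \<longleftrightarrow> minor_le \<gamma> (take s c, take s d)" for s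
  have cd: "length c = length d" using \<delta> by (simp add: minors_def is_minor_def)
  have P_antimono: "P s'" if "P s" "s' \<le> s" "s \<le> length c" for s s'
    using minor_le_trans[OF that(1)[unfolded P_def] minor_le_take[of "take s c" "take s d" s']]
      that cd by (simp add: P_def min_absorb1)
  have "\<not> P (length c)" using not_le cd by (simp add: P_def)
  define N where "N = (LEAST s. \<not> P s)"
  have "\<not> P N" "N \<le> length c"
    using LeastI[of "\<lambda>s. \<not> P s", OF \<open>\<not> P (length c)\<close>] Least_le[of "\<lambda>s. \<not> P s", OF \<open>\<not> P (length c)\<close>]
    by (simp_all add: N_def)
  moreover have "N \<noteq> 0" using \<open>\<not> P N\<close> by (auto simp: P_def minor_le_def)
  moreover have "N \<le> length e" if "(e, f) \<in> upset m n (c, d) - upset m n \<gamma>" for e f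
  proof (rule ccontr)
    assume "\<not> N \<le> length e"
    then have "P (length e)" using not_less_Least[of "length e" "\<lambda>s. \<not> P s"] by (simp add: N_def)
    moreover have "minor_le (take (length e) c, take (length e) d) (e, f)"
      using that minor_le_take_length[OF cd] by (simp add: upset_def)
    ultimately have "minor_le \<gamma> (e, f)" unfolding P_def by (rule minor_le_trans)
    then show False using that by (auto simp: upset_def)
  qed
  moreover have "(take s c, take s d) \<in> upset m n (c, d) - upset m n \<gamma>"
    if "N \<le> s" "s \<le> length c" for s
    using take_in_upset[OF \<delta>, of s] P_antimono[of s N] \<open>\<not> P N\<close> \<open>N \<noteq> 0\<close> that
    by (auto simp: upset_def P_def)
  ultimately show ?thesis by (intro exI[of _ N]) auto
qed

definition minor_weight :: "nat \<Rightarrow> nat \<Rightarrow> nat list \<times> nat list \<Rightarrow> nat" where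
  "minor_weight m n x = (case x of (e, f) \<Rightarrow>
      \<Sum>j<m. if j < length e then e ! j + f ! j else m + n + 1)"

lemma minor_weight_mono:
  assumes "x \<in> minors m n" "minor_le x y"
  shows "minor_weight m n x \<le> minor_weight m n y"
proof -
  obtain e f c d where xy: "x = (e, f)" "y = (c, d)" by fastforce
  have bounds: "e ! j \<le> m" "f ! j \<le> n" if "j < length e" for j
  proof -
    have "e ! j \<in> set e" "f ! j \<in> set f"
      using assms(1) that by (auto simp: xy minors_def is_minor_def)
    then show "e ! j \<le> m" "f ! j \<le> n"
      using assms(1) by (auto simp: xy minors_def is_minor_def)
  qed
  have "(if j < length e then e ! j + f ! j else m + n + 1)
      \<le> (if j < length c then c ! j + d ! j else m + n + 1)" for j
    using assms(2) bounds[of j] by (fastforce simp: xy minor_le_def)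
  then show ?thesis by (simp add: xy minor_weight_def sum_mono)
qed

lemma minor_weight_eq:
  assumes "(e, f) \<in> minors m n"
  shows "minor_weight m n (e, f) = \<Sum>(set e) + \<Sum>(set f) + (m - length e) * (m + n + 1)"
proof -
  have e: "length e = length f" "length e \<le> m" "distinct e" "distinct f"
    using assms by (auto simp: minors_def is_minor_def strict_sorted_iff)
  have "minor_weight m n (e, f) = (\<Sum>j<length e. e ! j + f ! j) + (m - length e) * (m + n + 1)"
    unfolding minor_weight_def lessThan_atLeast0
    using sum.atLeastLessThan_concat[OF _ e(2), of 0
        "\<lambda>j. if j < length e then e ! j + f ! j else m + n + 1", symmetric]
    by simp
  also have "(\<Sum>j<length e. e ! j + f ! j) = sum_list e + sum_list f"
    using e(1) by (simp add: sum.distrib sum_list_sum_nth atLeast0LessThan)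
  finally show ?thesis
    using e sum.distinct_set_conv_list[of e "\<lambda>x. x"] sum.distinct_set_conv_list[of f "\<lambda>x. x"]
    by simp
qed

lemma set_assoc_seq:
  "set (assoc_seq m n (c, d)) = set d \<union> (\<lambda>e. m + n + 1 - e) ` ({1..m} - set c)"
proof -
  have "{m + n + 1 - e | e. e \<in> {1..m} - set c} = (\<lambda>e. m + n + 1 - e) ` ({1..m} - set c)"
    by auto
  then show ?thesis by (simp add: assoc_seq_def)
qed

lemma assoc_seq_minor:
  assumes "(c, d) \<in> minors m n"
  shows "set (assoc_seq m n (c, d)) \<subseteq> {1..m + n}"
    and "card (set (assoc_seq m n (c, d))) = m"
    and "\<Sum>(set (assoc_seq m n (c, d))) + \<Sum>{1..m} = minor_weight m n (c, d)"
proof -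
  let ?R = "{1..m} - set c"
  let ?N = "m + n + 1"
  have cd: "length c = length d" "distinct c" "distinct d" "set c \<subseteq> {1..m}" "set d \<subseteq> {1..n}"
    using assms by (auto simp: minors_def is_minor_def strict_sorted_iff)
  have inj: "inj_on (\<lambda>e. ?N - e) ?R" by (auto simp: inj_on_def)
  have disj: "set d \<inter> (\<lambda>e. ?N - e) ` ?R = {}" using cd(5) by fastforce
  have card_R: "card ?R = m - length c"
    using cd by (simp add: card_Diff_subset distinct_card)
  show "set (assoc_seq m n (c, d)) \<subseteq> {1..m + n}"
    using cd(5) by (auto simp: set_assoc_seq)
  show "card (set (assoc_seq m n (c, d))) = m"
  proof -
    have "card (set d \<union> (\<lambda>e. ?N - e) ` ?R) = length d + (m - length c)"
      using card_Un_disjoint[OF _ _ disj] card_image[OF inj] card_R cd by (simp add: distinct_card)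
    then show ?thesis
      using cd card_mono[OF _ cd(4)] by (simp add: set_assoc_seq distinct_card)
  qed
  have "(\<Sum>e\<in>?R. ?N - e) + \<Sum>?R = card ?R * ?N"
    by (auto simp: sum.distrib[symmetric] intro: sum.cong)
  moreover have "\<Sum>?R + \<Sum>(set c) = \<Sum>{1..m}"
    using sum.subset_diff[OF cd(4), of "\<lambda>x. x"] by simp
  moreover have "\<Sum>(set d \<union> (\<lambda>e. ?N - e) ` ?R) = \<Sum>(set d) + (\<Sum>e\<in>?R. ?N - e)"
    using sum.union_disjoint[OF _ _ disj, of "\<lambda>x. x"] sum.reindex[OF inj, of "\<lambda>x. x"] by simp
  ultimately show "\<Sum>(set (assoc_seq m n (c, d))) + \<Sum>{1..m} = minor_weight m n (c, d)"
    using card_R by (simp add: set_assoc_seq minor_weight_eq[OF assms])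
qed

lemma sorted_wrt_less_nth_le_iff:
  fixes xs :: "'a::linorder list"
  assumes "sorted_wrt (<) xs" "j < length xs"
  shows "xs ! j \<le> a \<longleftrightarrow> j < length (filter (\<lambda>x. x \<le> a) xs)"
  using assms
proof (induction xs arbitrary: j)
  case (Cons x xs)
  then have "filter (\<lambda>x. x \<le> a) xs = []" if "\<not> x \<le> a"
    using that by (auto simp: filter_empty_conv)
  with Cons show ?case
    by (cases j) (auto simp: nth_Cons' dest: nth_mem)
qed simp

lemma assoc_minor_sorted_list_of_set:
  assumes T: "finite T" "card T = m" and low: "\<exists>x\<in>T. x \<le> n"
  shows "assoc_minor m n (sorted_list_of_set T) =
    (sorted_list_of_set ({1..m} - (\<lambda>x. m + n + 1 - x) ` {x\<in>T. n < x}),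
     sorted_list_of_set {x\<in>T. x \<le> n})"
proof -
  define b where "b = sorted_list_of_set T"
  define s where "s = card {x\<in>T. x \<le> n}"
  have b: "sorted_wrt (<) b" "length b = m" "set b = T" "distinct b"
    using T by (simp_all add: b_def)
  have nth_le_iff: "b ! j \<le> n \<longleftrightarrow> j < s" if "j < m" for j
    using sorted_wrt_less_nth_le_iff[OF b(1), of j n] that b
    by (simp add: s_def distinct_card[symmetric] Collect_conj_eq Int_commute)
  have "1 \<le> s" "s \<le> m"
    using T low by (auto simp: s_def Suc_le_eq card_gt_0_iff intro: card_mono)
  have "{j. 1 \<le> j \<and> j \<le> m \<and> b ! (j - 1) \<le> n} = {1..s}"
    using nth_le_iff \<open>s \<le> m\<close> by auto
  then have Max: "Max {j. 1 \<le> j \<and> j \<le> m \<and> b ! (j - 1) \<le> n} = s"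
    using \<open>1 \<le> s\<close> by (simp add: Max_eq_iff)
  have high_set: "{b ! (j - 1) | j. s < j \<and> j \<le> m} = {x\<in>T. n < x}"
  proof (intro set_eqI iffI)
    fix x assume "x \<in> {x\<in>T. n < x}"
    then obtain i where "i < m" "x = b ! i" "n < x" using b by (auto simp: in_set_conv_nth)
    then show "x \<in> {b ! (j - 1) | j. s < j \<and> j \<le> m}"
      using nth_le_iff[of i] by (auto intro!: exI[of _ "Suc i"])
  next
    fix x assume "x \<in> {b ! (j - 1) | j. s < j \<and> j \<le> m}"
    then obtain j where "s < j" "j \<le> m" "x = b ! (j - 1)" by blast
    moreover from this have "j - 1 < m" "\<not> j - 1 < s" by auto
    ultimately show "x \<in> {x\<in>T. n < x}"
      using nth_le_iff[of "j - 1"] b by auto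
  qed
  have high: "{m + n + 1 - b ! (j - 1) | j. s < j \<and> j \<le> m} = (\<lambda>x. m + n + 1 - x) ` {x\<in>T. n < x}"
    unfolding high_set[symmetric] by auto
  have "set (take s b) = {b ! i | i. i < s}"
    using \<open>s \<le> m\<close> b(2) by (force simp: set_conv_nth)
  also have "\<dots> = {x\<in>T. x \<le> n}"
  proof (intro set_eqI iffI)
    fix x assume "x \<in> {x\<in>T. x \<le> n}"
    then obtain i where "i < m" "x = b ! i" "x \<le> n" using b by (auto simp: in_set_conv_nth)
    then show "x \<in> {b ! i | i. i < s}" using nth_le_iff[of i] by auto
  qed (use nth_le_iff b \<open>s \<le> m\<close> in auto)
  finally have "set (take s b) = {x\<in>T. x \<le> n}" .
  then have "take s b = sorted_list_of_set {x\<in>T. x \<le> n}"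
    using b(1) by (metis sorted_wrt_take sorted_list_of_set.idem_if_sorted_distinct strict_sorted_iff)
  then show ?thesis
    unfolding assoc_minor_def Let_def b_def[symmetric] Max high by simp
qed

lemma reflect_high_part_subset:
  fixes m n :: nat
  assumes "T \<subseteq> {1..m + n}"
  shows "(\<lambda>x. m + n + 1 - x) ` {x\<in>T. n < x} \<subseteq> {1..m}"
proof (rule image_subsetI)
  fix x assume "x \<in> {x\<in>T. n < x}"
  with assms have "n < x" "x \<le> m + n" by auto
  then show "m + n + 1 - x \<in> {1..m}" by auto
qed

lemma assoc_minor_mem_minors:
  assumes T: "T \<subseteq> {1..m + n}" "card T = m" and low: "\<exists>x\<in>T. x \<le> n"
  shows "assoc_minor m n (sorted_list_of_set T) \<in> minors m n"
proof -
  let ?H = "{x\<in>T. n < x}" and ?L = "{x\<in>T. x \<le> n}"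
  let ?g = "\<lambda>x. m + n + 1 - x"
  have fin: "finite T" using T(1) finite_subset by blast
  have inj: "inj_on ?g ?H" using T(1) by (auto simp: inj_on_def)
  have gH: "?g ` ?H \<subseteq> {1..m}" using reflect_high_part_subset[OF T(1)] .
  have "T = ?H \<union> ?L" "?H \<inter> ?L = {}" by auto
  then have "card ?H + card ?L = m"
    using T(2) fin card_Un_disjoint[of ?H ?L] by simp
  then have "card ({1..m} - ?g ` ?H) = card ?L"
    using card_Diff_subset[OF finite_imageI gH] card_image[OF inj] fin by simp
  moreover have L_sub: "?L \<subseteq> {1..n}" using T(1) by auto
  moreover have "card ?L \<le> n" "card ?L \<le> m" "1 \<le> card ?L"
    using T fin low L_sub card_mono[of "{1..n}" ?L] card_mono[of T ?L]
    by (auto simp: Suc_le_eq card_gt_0_iff)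
  ultimately show ?thesis
    using fin by (simp add: assoc_minor_sorted_list_of_set[OF fin T(2) low] minors_def is_minor_def)
qed

lemma set_assoc_seq_assoc_minor:
  assumes T: "T \<subseteq> {1..m + n}" "card T = m" and low: "\<exists>x\<in>T. x \<le> n"
  shows "set (assoc_seq m n (assoc_minor m n (sorted_list_of_set T))) = T"
proof -
  let ?g = "\<lambda>x. m + n + 1 - x"
  have fin: "finite T" using T(1) finite_subset by blast
  have "{1..m} - ({1..m} - ?g ` {x\<in>T. n < x}) = ?g ` {x\<in>T. n < x}"
    using reflect_high_part_subset[OF T(1)] by blast
  moreover have "?g ` ?g ` {x\<in>T. n < x} = {x\<in>T. n < x}"
    using T(1) by (force simp: image_image)
  ultimately show ?thesis
    using fin by (auto simp: assoc_minor_sorted_list_of_set[OF fin T(2) low] set_assoc_seq)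
qed

lemma minor_weight_assoc_minor:
  assumes "T \<subseteq> {1..m + n}" "card T = m" "\<exists>x\<in>T. x \<le> n"
  shows "minor_weight m n (assoc_minor m n (sorted_list_of_set T)) = \<Sum>T + \<Sum>{1..m}"
proof -
  obtain e f where ef: "assoc_minor m n (sorted_list_of_set T) = (e, f)" by fastforce
  show ?thesis
    using assoc_seq_minor(3)[of e f m n] assoc_minor_mem_minors[OF assms]
      set_assoc_seq_assoc_minor[OF assms] by (simp add: ef)
qed

lemma ex_le_if_sorted_list_of_set_ne_upt:
  fixes m n :: nat
  assumes "T \<subseteq> {1..m + n}" "card T = m" "sorted_list_of_set T \<noteq> [n + 1..<n + m + 1]"
  shows "\<exists>x\<in>T. x \<le> n"
proof (rule ccontr)
  assume "\<not> (\<exists>x\<in>T. x \<le> n)"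
  with assms(1) have "T \<subseteq> {n + 1..<n + m + 1}" by force
  then have "T = {n + 1..<n + m + 1}"
    using assms(2) by (intro card_subset_eq) simp_all
  with assms(3) show False by simp
qed

lemma tau_seq_exchange:
  assumes "1 \<le> i" "i \<le> num_t m n x"
  obtains u v where "u < v" "u \<in> set (assoc_seq m n x)" "v \<in> set (assoc_seq m n x)"
    "Suc v \<notin> set (assoc_seq m n x)" "v \<noteq> n + m"
    "tau_seq m n x i = sorted_list_of_set ((set (assoc_seq m n x) - {u}) \<union> {Suc v})"
proof -
  define A where "A = set (assoc_seq m n x)"
  define E where "E = block_ends m n x"
  have E: "E = sorted_list_of_set {y\<in>A. Suc y \<notin> A \<and> y \<noteq> n + m}"
    by (simp add: E_def A_def block_ends_def Let_def)
  have i: "i < length E" using assms by (simp add: num_t_def E_def)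
  have "E ! (i - 1) < E ! i"
    using sorted_wrt_nth_less[OF strict_sorted_list_of_set[of "{y\<in>A. Suc y \<notin> A \<and> y \<noteq> n + m}"]] i assms(1)
    by (simp add: E[symmetric])
  moreover have "E ! (i - 1) \<in> set E" "E ! i \<in> set E" using i by simp_all
  then have "E ! (i - 1) \<in> A" "E ! i \<in> A" "Suc (E ! i) \<notin> A" "E ! i \<noteq> n + m"
    by (simp_all add: E A_def)
  moreover have "tau_seq m n x i = sorted_list_of_set ((A - {E ! (i - 1)}) \<union> {Suc (E ! i)})"
    by (simp add: tau_seq_def A_def E_def Let_def)
  ultimately show thesis using that unfolding A_def by blast
qed

lemma not_minor_le_tau:
  assumes \<delta>: "(c, d) \<in> minors m n" and i: "1 \<le> i" "i \<le> num_t m n (c, d)"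
    and not_top: "tau_seq m n (c, d) i \<noteq> [n + 1..<n + m + 1]"
  shows "\<not> minor_le (assoc_minor m n (tau_seq m n (c, d) i)) (c, d)"
proof
  assume le: "minor_le (assoc_minor m n (tau_seq m n (c, d) i)) (c, d)"
  define A where "A = set (assoc_seq m n (c, d))"
  obtain u v where uv: "u < v" "u \<in> A" "v \<in> A" "Suc v \<notin> A" "v \<noteq> n + m"
    and tau: "tau_seq m n (c, d) i = sorted_list_of_set ((A - {u}) \<union> {Suc v})"
    using tau_seq_exchange[OF i] unfolding A_def by blast
  define T where "T = (A - {u}) \<union> {Suc v}"
  have A: "finite A" "A \<subseteq> {1..m + n}" "card A = m"
    using assoc_seq_minor[OF \<delta>] by (simp_all add: A_def)
  have T_sub: "T \<subseteq> {1..m + n}" using A(2) uv by (auto simp: T_def)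
  have "0 < m" using A uv(2) card_gt_0_iff by blast
  then have T_card: "card T = m"
    using A uv by (simp add: T_def card.insert_remove card_Diff_singleton)
  have T_low: "\<exists>x\<in>T. x \<le> n"
    using ex_le_if_sorted_list_of_set_ne_upt[OF T_sub T_card] not_top tau by (simp add: T_def)
  have "\<Sum>T = Suc v + \<Sum>(A - {u})" using A(1) uv(4) by (simp add: T_def)
  moreover have "\<Sum>A = u + \<Sum>(A - {u})" using A(1) uv(2) by (simp add: sum.remove)
  ultimately have "\<Sum>A < \<Sum>T" using uv(1) by simp
  have "minor_weight m n (assoc_minor m n (sorted_list_of_set T)) \<le> minor_weight m n (c, d)"
    using le minor_weight_mono assoc_minor_mem_minors[OF T_sub T_card T_low] tau by (simp add: T_def)
  then have "\<Sum>T \<le> \<Sum>A"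
    using minor_weight_assoc_minor[OF T_sub T_card T_low] assoc_seq_minor(3)[OF \<delta>] by (simp add: A_def)
  with \<open>\<Sum>A < \<Sum>T\<close> show False by simp
qed

theorem lemma4p7:
  fixes m n i :: nat and c d :: "nat list"
  assumes "(c, d) \<in> minors m n"
    and "1 \<le> i" and "i \<le> num_t m n (c, d)"
  shows "\<exists>Ni::nat. 1 \<le> Ni \<and> Ni \<le> length c \<and>
    (\<forall>e f. (e, f) \<in> upset m n (c, d) - tau_upset m n (c, d) i \<longrightarrow> Ni \<le> length e) \<and>
    (\<forall>s. Ni \<le> s \<and> s \<le> length c \<longrightarrow>
       (take s c, take s d) \<in> upset m n (c, d) - tau_upset m n (c, d) i)"
proof (cases "tau_seq m n (c, d) i = [n + 1..<n + m + 1]")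
  case True
  then show ?thesis
    using take_in_upset[OF assms(1)] assms(1)
    by (intro exI[of _ 1]) (auto simp: tau_upset_def upset_def minors_def is_minor_def)
next
  case False
  then show ?thesis
    using upset_diff_length_threshold[OF assms(1) not_minor_le_tau[OF assms False]]
    by (simp add: tau_upset_def)
qed

end
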